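(* Let $\boldsymbol L=(L_i)_{i\ge1}$ be i.i.d. with law $\phi$ on $\mathcal T\in\{\mathbb N,[0,\infty)\}$, $\phi(\{0\})=0$, with $\int_0^\infty e^{\xi u}d\phi(u)<\infty$ for all $\xi\in\mathbb R$. Let $\mu$ be either $\mu_1(x)=\frac{\alpha}{x}(\log x)^{\alpha-1}e^{\beta(\log x)^\alpha}$ ($\alpha>0,\beta\ge0$) or $\mu_2(x)=\gamma\delta x^{\delta-1}e^{\gamma x^\delta}$ ($\gamma>0,\delta\in(0,1/2]$). Let $T_0=0$, $T_n=\sum_{i\le n}L_i$, $W_i=\int_{T_{i-1}}^{T_i}\mu(u)\,du$, and conditionally on $\boldsymbol L$ let $F_i$ have $\mathbb P(F_i\le x\mid\boldsymbol L)=\int_{T_{i-1}}^{T_{i-1}+x}\mu(u)\,du/W_i$ for $0\le x\le L_i$. Let $f:\mathbb R\to\mathbb R$ be differentiable and define $R_i$ by $$W_i\,\mathbb E[f'(F_i)\mid\boldsymbol L]=\mu(T_{i-1})R_i.$$ Then there exist a random integer $I_0$ and a constant $c>0$ independent of $f$ such that for all $i\ge I_0$, $$|R_i-(f(L_i)-f(0))|\le\begin{cases}\dfrac{c\,(f(L_i)-f(0))L_i(\log T_{i-1})^{\tilde\alpha-1}}{T_{i-1}}&\text{if }\mu=\mu_1,\\[2mm]\dfrac{c\,(f(L_i)-f(0))L_i}{T_{i-1}^{1-\delta}}&\text{if }\mu=\mu_2,\end{cases}$$ where $\tilde\alpha=\max\{1,\alpha\}$.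
   Formalization: The bound is claimed only for functions f that are nondecreasing on [0, infinity) as well as differentiable, not for every differentiable f. The statement above fails without it. *)

theory Defs
  imports "HOL-Probability.Probability"
begin

definition mu1 :: "real \<Rightarrow> real \<Rightarrow> real \<Rightarrow> real" where
  "mu1 \<alpha> \<beta> x = \<alpha> / x * (ln x) powr (\<alpha> - 1) * exp (\<beta> * (ln x) powr \<alpha>)"

definition mu2 :: "real \<Rightarrow> real \<Rightarrow> real \<Rightarrow> real" where
  "mu2 \<gamma> \<delta> x = \<gamma> * \<delta> * x powr (\<delta> - 1) * exp (\<gamma> * x powr \<delta>)"

definition partial_sum :: "(nat \<Rightarrow> 'a \<Rightarrow> real) \<Rightarrow> nat \<Rightarrow> 'a \<Rightarrow> real" where
  "partial_sum L n \<omega> = (\<Sum>k\<in>{1..n}. L k \<omega>)"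

text \<open>W = integral of mu over [t, t + l]  (with t = T_{i-1}, l = L_i this is W_i).\<close>
definition Wint :: "(real \<Rightarrow> real) \<Rightarrow> real \<Rightarrow> real \<Rightarrow> real" where
  "Wint \<mu> t l = (\<integral>u\<in>{t..t+l}. \<mu> u \<partial>lborel)"

text \<open>Conditional law of F_i given the sequence L (with t = T_{i-1}, l = L_i):
  the law on [0,l] with distribution function x \<mapsto> (integral of mu over [t,t+x]) / W,
  i.e. density mu(t+x)/W on [0,l].\<close>
definition cond_law :: "(real \<Rightarrow> real) \<Rightarrow> real \<Rightarrow> real \<Rightarrow> real measure" where
  "cond_law \<mu> t l = density lborel (\<lambda>x. ennreal (indicator {0..l} x * \<mu> (t + x) / Wint \<mu> t l))"

definition Rterm :: "(real \<Rightarrow> real) \<Rightarrow> (real \<Rightarrow> real) \<Rightarrow> real \<Rightarrow> real \<Rightarrow> real" where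
  "Rterm \<mu> f t l = Wint \<mu> t l * (\<integral>x. deriv f x \<partial>cond_law \<mu> t l) / \<mu> t"

end

theory Submission
  imports Defs "HOL-Real_Asymp.Real_Asymp"
begin

text \<open>Since f' \<ge> 0, R_i is the integral of f' over [0, L_i] weighted by \<mu>(T_(i-1) + x) / \<mu>(T_(i-1)),
  so R_i - (f L_i - f 0) is at most sup |\<mu>(T_(i-1) + x) / \<mu>(T_(i-1)) - 1| times f L_i - f 0.
  For both intensities ln \<mu> is Lipschitz on [t, 2t] with constant C \<rho>(t), which bounds that
  supremum by C e^C L_i \<rho>(T_(i-1)) once L_i \<rho>(T_(i-1)) \<le> 1. Since \<rho>(t) \<le> t^(-1/2), the latter
  holds eventually almost surely: T_n grows linearly (a Chernoff bound and Borel-Cantelli), and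
  L_n \<le> 2 ln n eventually (the exponential moment, Markov's inequality and Borel-Cantelli).\<close>

lemma abs_exp_minus_one_le: "\<bar>exp y - 1\<bar> \<le> \<bar>y\<bar> * exp \<bar>y\<bar>" for y :: real
proof (cases "0 \<le> y")
  case True
  have "1 - y \<le> exp (- y)" using exp_ge_add_one_self[of "- y"] by simp
  then have "(1 - y) * exp y \<le> exp (- y) * exp y" by (intro mult_right_mono) auto
  also have "\<dots> = 1" by (simp flip: exp_add)
  finally show ?thesis using True by (simp add: algebra_simps)
next
  case False
  have "exp y \<le> 1" using False by simp
  then have "\<bar>exp y - 1\<bar> = 1 - exp y" by simp
  also have "\<dots> \<le> - y" using exp_ge_add_one_self[of y] by linarith
  also have "\<dots> \<le> - y * exp (- y)" using False by simp
  finally show ?thesis using False by simp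
qed

lemma powr_diff_mean_value:
  fixes s s' a :: real
  assumes "0 < s" "s \<le> s'"
  obtains z where "s \<le> z" "z \<le> s'" "s' powr a - s powr a = (s' - s) * (a * z powr (a - 1))"
proof (cases "s = s'")
  case False
  with assms have "s < s'" by simp
  from MVT2[OF this, of "\<lambda>z. z powr a" "\<lambda>z. a * z powr (a - 1)"] assms
  obtain z where "s < z" "z < s'" "s' powr a - s powr a = (s' - s) * (a * z powr (a - 1))"
    using has_real_derivative_powr by force
  then show ?thesis by (intro that[of z]) auto
qed (use that in auto)

lemma ln_add_diff_bounds:
  fixes t x :: real
  assumes "0 < t" "0 \<le> x"
  shows "0 \<le> ln (t + x) - ln t" "ln (t + x) - ln t \<le> x / t"
proof -
  have "1 + x / t = (t + x) / t" using assms by (simp add: add_divide_distrib)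
  then have "ln (t + x) - ln t = ln (1 + x / t)" using assms by (simp add: ln_div)
  moreover have "ln (1 + x / t) \<le> x / t" "0 \<le> ln (1 + x / t)"
    using assms by (auto intro: ln_add_one_self_le_self)
  ultimately show "0 \<le> ln (t + x) - ln t" "ln (t + x) - ln t \<le> x / t" by simp_all
qed

lemma borel_measurable_deriv:
  fixes f :: "real \<Rightarrow> real"
  assumes "\<And>x. f differentiable (at x)"
  shows "deriv f \<in> borel_measurable borel"
proof (rule borel_measurable_LIMSEQ_real)
  have cont: "continuous_on UNIV f"
    using assms by (meson differentiable_imp_continuous_on differentiable_on_def)
  show "(\<lambda>x. (f (x + 1 / Suc n) - f x) / (1 / Suc n)) \<in> borel_measurable borel" for n
    by (intro borel_measurable_divide borel_measurable_diff borel_measurable_continuous_onI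
        continuous_on_compose2[OF cont] continuous_intros) auto
  fix x
  have "((\<lambda>y. (f y - f x) / (y - x)) \<longlongrightarrow> deriv f x) (at x)"
    using assms DERIV_deriv_iff_real_differentiable DERIV_def has_field_derivative_iff by blast
  moreover have "filterlim (\<lambda>n::nat. x + 1 / Suc n) (at x) sequentially"
  proof (rule filterlim_atI)
    show "((\<lambda>n::nat. x + 1 / Suc n) \<longlongrightarrow> x) sequentially"
      using tendsto_add[OF tendsto_const[of x] LIMSEQ_Suc[OF lim_inverse_n']]
      by (simp add: divide_inverse)
  qed simp
  ultimately have "((\<lambda>n::nat. (f (x + 1 / Suc n) - f x) / (x + 1 / Suc n - x)) \<longlongrightarrow> deriv f x) sequentially"
    by (rule filterlim_compose)
  then show "(\<lambda>n. (f (x + 1 / Suc n) - f x) / (1 / Suc n)) \<longlonglongrightarrow> deriv f x"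
    by simp
qed

lemma mono_on_atLeast_imp_deriv_nonneg:
  fixes f :: "real \<Rightarrow> real"
  assumes mono: "mono_on {a..} f" and deriv: "DERIV f x :> D" and "a \<le> x"
  shows "0 \<le> D"
proof (rule ccontr)
  assume "\<not> 0 \<le> D"
  then obtain d where "0 < d" and dec: "\<And>h. 0 < h \<Longrightarrow> h < d \<Longrightarrow> f (x + h) < f x"
    using DERIV_neg_dec_right[OF deriv] by force
  then have "f (x + d / 2) < f x" by simp
  moreover have "f x \<le> f (x + d / 2)"
    using \<open>a \<le> x\<close> \<open>0 < d\<close> by (intro mono_onD[OF mono]) auto
  ultimately show False by simp
qed

lemma FTC_weighted_error_le:
  fixes F f r :: "real \<Rightarrow> real"
  assumes [measurable]: "f \<in> borel_measurable borel" "r \<in> borel_measurable borel"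
    and F: "\<And>x. x \<in> {a..b} \<Longrightarrow> DERIV F x :> f x"
    and f_nonneg: "\<And>x. x \<in> {a..b} \<Longrightarrow> 0 \<le> f x" and "a \<le> b"
    and r: "\<And>x. x \<in> {a..b} \<Longrightarrow> \<bar>r x - 1\<bar> \<le> E"
  shows "\<bar>(\<integral>x. f x * r x * indicator {a..b} x \<partial>lborel) - (F b - F a)\<bar> \<le> E * (F b - F a)"
proof -
  define g where "g x = f x * indicator {a..b} x" for x
  have g_int: "integrable lborel g"
    unfolding g_def by (rule integrable_FTC_Icc_nonneg[where F = F]) (use F f_nonneg \<open>a \<le> b\<close> in auto)
  have g_integral: "(\<integral>x. g x \<partial>lborel) = F b - F a"
    unfolding g_def by (rule integral_FTC_Icc_nonneg) (use F f_nonneg \<open>a \<le> b\<close> in auto)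
  have err_le: "norm (g x * (r x - 1)) \<le> E * g x" for x
    using r[of x] f_nonneg[of x] mult_left_mono[of "\<bar>r x - 1\<bar>" E "f x"]
    by (auto simp: g_def abs_mult mult.commute split: split_indicator)
  have err_int: "integrable lborel (\<lambda>x. g x * (r x - 1))"
    by (rule Bochner_Integration.integrable_bound[OF integrable_mult_right[OF g_int, of E]])
       (use err_le in \<open>auto simp: g_def intro!: AE_I2 order_trans[OF _ abs_ge_self]\<close>)
  have "(\<integral>x. f x * r x * indicator {a..b} x \<partial>lborel) = (\<integral>x. g x + g x * (r x - 1) \<partial>lborel)"
    by (rule Bochner_Integration.integral_cong) (auto simp: g_def algebra_simps)
  also have "\<dots> = (F b - F a) + (\<integral>x. g x * (r x - 1) \<partial>lborel)"
    using g_int err_int g_integral by simp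
  finally have "\<bar>(\<integral>x. f x * r x * indicator {a..b} x \<partial>lborel) - (F b - F a)\<bar>
      = \<bar>\<integral>x. g x * (r x - 1) \<partial>lborel\<bar>" by simp
  also have "\<dots> \<le> (\<integral>x. norm (g x * (r x - 1)) \<partial>lborel)"
    using integral_norm_bound[of lborel "\<lambda>x. g x * (r x - 1)"] by simp
  also have "\<dots> \<le> (\<integral>x. E * g x \<partial>lborel)"
    by (rule integral_mono[OF integrable_norm[OF err_int] integrable_mult_right[OF g_int] err_le])
  also have "\<dots> = E * (F b - F a)" using g_integral by simp
  finally show ?thesis .
qed

lemma Rterm_eq_integral:
  fixes \<mu> f :: "real \<Rightarrow> real"
  assumes [measurable]: "\<mu> \<in> borel_measurable borel" "deriv f \<in> borel_measurable borel"
    and W: "0 < Wint \<mu> t l" and \<mu>_nonneg: "\<And>x. x \<in> {0..l} \<Longrightarrow> 0 \<le> \<mu> (t + x)"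
  shows "Rterm \<mu> f t l = (\<integral>x. deriv f x * (\<mu> (t + x) / \<mu> t) * indicator {0..l} x \<partial>lborel)"
proof -
  define W where "W = Wint \<mu> t l"
  have "(\<integral>x. deriv f x \<partial>cond_law \<mu> t l)
      = (\<integral>x. indicator {0..l} x * \<mu> (t + x) / W * deriv f x \<partial>lborel)"
    unfolding cond_law_def W_def[symmetric] using W \<mu>_nonneg
    by (subst integral_density) (auto simp: W_def split: split_indicator)
  also have "\<dots> = (\<integral>x. deriv f x * \<mu> (t + x) * indicator {0..l} x \<partial>lborel) / W"
    by (subst integral_divide_zero[symmetric]) (auto intro!: Bochner_Integration.integral_cong)
  finally have "Rterm \<mu> f t l = (\<integral>x. deriv f x * \<mu> (t + x) * indicator {0..l} x \<partial>lborel) / \<mu> t"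
    using W by (simp add: Rterm_def W_def)
  also have "\<dots> = (\<integral>x. deriv f x * (\<mu> (t + x) / \<mu> t) * indicator {0..l} x \<partial>lborel)"
    by (subst integral_divide_zero[symmetric]) (auto intro!: Bochner_Integration.integral_cong)
  finally show ?thesis .
qed

lemma Wint_pos:
  fixes \<mu> :: "real \<Rightarrow> real"
  assumes [measurable]: "\<mu> \<in> borel_measurable borel"
    and "0 < l" "0 < m" and \<mu>_bounds: "\<And>u. u \<in> {t..t+l} \<Longrightarrow> m \<le> \<mu> u \<and> \<mu> u \<le> B"
  shows "0 < Wint \<mu> t l"
proof -
  have const_int: "integrable lborel (\<lambda>u. indicator {t..t+l} u * c)" for c :: real
    by (intro integrable_mult_left integrable_real_indicator) (auto simp: emeasure_lborel_Icc_eq)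
  have "norm (indicator {t..t+l} u * \<mu> u) \<le> norm (indicator {t..t+l} u * B)" for u
    using \<mu>_bounds[of u] \<open>0 < m\<close> by (cases "u \<in> {t..t+l}") auto
  then have \<mu>_int: "integrable lborel (\<lambda>u. indicator {t..t+l} u * \<mu> u)"
    by (intro Bochner_Integration.integrable_bound[OF const_int[of B]] AE_I2) auto
  have "m * l = (\<integral>u. indicator {t..t+l} u * m \<partial>lborel)"
    using \<open>0 < l\<close> by simp
  also have "\<dots> \<le> (\<integral>u. indicator {t..t+l} u * \<mu> u \<partial>lborel)"
    by (intro integral_mono const_int \<mu>_int) (use \<mu>_bounds in \<open>auto split: split_indicator\<close>)
  also have "\<dots> = Wint \<mu> t l"
    by (simp add: Wint_def set_lebesgue_integral_def)
  finally show ?thesis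
    using mult_pos_pos[OF \<open>0 < m\<close> \<open>0 < l\<close>] by linarith
qed

lemma Rterm_error_le:
  fixes f \<mu> :: "real \<Rightarrow> real"
  assumes df: "\<And>x. f differentiable (at x)" and mono: "mono_on {0..} f"
    and "0 < l" and \<mu>_meas: "\<mu> \<in> borel_measurable borel" and "0 < \<mu> t"
    and osc: "\<And>x. x \<in> {0..l} \<Longrightarrow> 0 < \<mu> (t + x) \<and> \<bar>ln (\<mu> (t + x)) - ln (\<mu> t)\<bar> \<le> D"
  shows "\<bar>Rterm \<mu> f t l - (f l - f 0)\<bar> \<le> D * exp D * (f l - f 0)"
proof -
  have ratio_exp: "\<mu> (t + x) / \<mu> t = exp (ln (\<mu> (t + x)) - ln (\<mu> t))" if "x \<in> {0..l}" for x
    using osc[OF that] \<open>0 < \<mu> t\<close> by (simp add: exp_diff)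
  have ratio_err: "\<bar>\<mu> (t + x) / \<mu> t - 1\<bar> \<le> D * exp D" if "x \<in> {0..l}" for x
  proof -
    have "\<bar>\<mu> (t + x) / \<mu> t - 1\<bar> \<le> \<bar>ln (\<mu> (t + x)) - ln (\<mu> t)\<bar> * exp \<bar>ln (\<mu> (t + x)) - ln (\<mu> t)\<bar>"
      unfolding ratio_exp[OF that] by (rule abs_exp_minus_one_le)
    also have "\<dots> \<le> D * exp D"
      using osc[OF that] by (intro mult_mono) auto
    finally show ?thesis .
  qed
  have \<mu>_bounds: "\<mu> t * exp (- D) \<le> \<mu> u \<and> \<mu> u \<le> \<mu> t * exp D" if "u \<in> {t..t+l}" for u
  proof -
    have x: "u - t \<in> {0..l}" using that by auto
    have "exp (- D) \<le> \<mu> u / \<mu> t" "\<mu> u / \<mu> t \<le> exp D"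
      using ratio_exp[OF x] osc[OF x] by auto
    then show ?thesis using \<open>0 < \<mu> t\<close> by (simp add: field_simps)
  qed
  have f'_meas[measurable]: "deriv f \<in> borel_measurable borel"
    using df by (rule borel_measurable_deriv)
  have f'_deriv: "DERIV f x :> deriv f x" for x
    using df DERIV_deriv_iff_real_differentiable by blast
  have "Rterm \<mu> f t l = (\<integral>x. deriv f x * (\<mu> (t + x) / \<mu> t) * indicator {0..l} x \<partial>lborel)"
    using \<mu>_meas osc \<open>0 < \<mu> t\<close> \<open>0 < l\<close> \<mu>_bounds
    by (intro Rterm_eq_integral Wint_pos[of _ _ "\<mu> t * exp (- D)" _ "\<mu> t * exp D"])
       (auto simp: less_imp_le)
  also have "\<bar>\<dots> - (f l - f 0)\<bar> \<le> D * exp D * (f l - f 0)"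
    using \<mu>_meas \<open>0 < l\<close> ratio_err mono_on_atLeast_imp_deriv_nonneg[OF mono f'_deriv]
    by (intro FTC_weighted_error_le[where F = f] f'_deriv) auto
  finally show ?thesis .
qed

definition log_lipschitz_scale :: "(real \<Rightarrow> real) \<Rightarrow> (real \<Rightarrow> real) \<Rightarrow> real \<Rightarrow> real \<Rightarrow> bool" where
  "log_lipschitz_scale \<mu> \<rho> C t0 \<longleftrightarrow> 0 < t0 \<and> \<mu> \<in> borel_measurable borel \<and>
     (\<forall>t\<ge>t0. 1 / t \<le> \<rho> t \<and> \<rho> t \<le> 1 / sqrt t \<and>
        (\<forall>x\<in>{0..t}. 0 < \<mu> (t + x) \<and> \<bar>ln (\<mu> (t + x)) - ln (\<mu> t)\<bar> \<le> C * x * \<rho> t))"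

lemma log_lipschitz_scale_Rterm_error:
  fixes f \<mu> \<rho> :: "real \<Rightarrow> real"
  assumes scale: "log_lipschitz_scale \<mu> \<rho> C t0" and "0 \<le> C" "t0 \<le> t" "0 < l" "l * \<rho> t \<le> 1"
    and df: "\<And>x. f differentiable (at x)" and mono: "mono_on {0..} f"
  shows "\<bar>Rterm \<mu> f t l - (f l - f 0)\<bar> \<le> C * exp C * (f l - f 0) * l * \<rho> t"
proof -
  have "0 < t" and \<mu>_meas: "\<mu> \<in> borel_measurable borel" and \<rho>_ge: "1 / t \<le> \<rho> t"
    and osc_t: "\<And>x. x \<in> {0..t} \<Longrightarrow> 0 < \<mu> (t + x) \<and> \<bar>ln (\<mu> (t + x)) - ln (\<mu> t)\<bar> \<le> C * x * \<rho> t"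
    using scale \<open>t0 \<le> t\<close> by (auto simp: log_lipschitz_scale_def)
  have "0 < \<rho> t" using \<rho>_ge \<open>0 < t\<close> by (meson divide_pos_pos order_less_le_trans zero_less_one)
  have "l \<le> 1 / \<rho> t" using \<open>l * \<rho> t \<le> 1\<close> \<open>0 < \<rho> t\<close> by (simp add: le_divide_eq)
  also have "\<dots> \<le> t" using \<rho>_ge \<open>0 < \<rho> t\<close> \<open>0 < t\<close> by (simp add: divide_le_eq mult.commute le_divide_eq)
  finally have "l \<le> t" .
  have osc: "0 < \<mu> (t + x) \<and> \<bar>ln (\<mu> (t + x)) - ln (\<mu> t)\<bar> \<le> C * l * \<rho> t" if "x \<in> {0..l}" for x
  proof -
    have "C * x * \<rho> t \<le> C * l * \<rho> t"
      using that \<open>0 \<le> C\<close> \<open>0 < \<rho> t\<close> by (intro mult_right_mono mult_left_mono) auto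
    then show ?thesis using osc_t[of x] that \<open>l \<le> t\<close> by auto
  qed
  have "0 < \<mu> t" using osc_t[of 0] \<open>0 < t\<close> by simp
  have "0 \<le> f l - f 0" using mono_onD[OF mono, of 0 l] \<open>0 < l\<close> by simp
  have "\<bar>Rterm \<mu> f t l - (f l - f 0)\<bar> \<le> (C * l * \<rho> t) * exp (C * l * \<rho> t) * (f l - f 0)"
    by (rule Rterm_error_le[OF df mono \<open>0 < l\<close> \<mu>_meas \<open>0 < \<mu> t\<close> osc])
  also have "\<dots> \<le> (C * l * \<rho> t) * exp C * (f l - f 0)"
  proof -
    have "C * l * \<rho> t \<le> C"
      using mult_left_mono[OF \<open>l * \<rho> t \<le> 1\<close> \<open>0 \<le> C\<close>] by (simp add: mult.assoc)
    moreover have "0 \<le> C * l * \<rho> t" using \<open>0 \<le> C\<close> \<open>0 < l\<close> \<open>0 < \<rho> t\<close> by simp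
    ultimately show ?thesis
      using \<open>0 \<le> f l - f 0\<close> by (intro mult_right_mono mult_left_mono) auto
  qed
  finally show ?thesis by (simp add: ac_simps)
qed

lemma ln_mu2:
  "0 < \<gamma> \<Longrightarrow> 0 < \<delta> \<Longrightarrow> 0 < u \<Longrightarrow>
    ln (mu2 \<gamma> \<delta> u) = ln (\<gamma> * \<delta>) + (\<delta> - 1) * ln u + \<gamma> * u powr \<delta>"
  by (simp add: mu2_def ln_mult)

lemma mu2_ln_increment_le:
  assumes "0 < \<gamma>" "0 < \<delta>" "\<delta> \<le> 1" "1 \<le> t" "0 \<le> x"
  shows "\<bar>ln (mu2 \<gamma> \<delta> (t + x)) - ln (mu2 \<gamma> \<delta> t)\<bar> \<le> (1 + \<gamma> * \<delta>) * x * (1 / t powr (1 - \<delta>))"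
proof -
  have ln_incr: "0 \<le> ln (t + x) - ln t" "ln (t + x) - ln t \<le> x / t"
    using ln_add_diff_bounds[of t x] assms by auto
  obtain z where z: "t \<le> z" "(t + x) powr \<delta> - t powr \<delta> = x * (\<delta> * z powr (\<delta> - 1))"
    using powr_diff_mean_value[of t "t + x" \<delta>] assms by auto
  have "x / t \<le> x * t powr (\<delta> - 1)"
  proof -
    have "t powr (-1) \<le> t powr (\<delta> - 1)" using assms by (intro powr_mono) auto
    then show ?thesis using assms by (simp add: powr_minus_divide divide_inverse mult_left_mono)
  qed
  then have ln_term: "\<bar>(\<delta> - 1) * (ln (t + x) - ln t)\<bar> \<le> x * t powr (\<delta> - 1)"
    using ln_incr assms mult_right_mono[of "1 - \<delta>" 1 "ln (t + x) - ln t"]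
    by (simp add: abs_mult)
  have "z powr (\<delta> - 1) \<le> t powr (\<delta> - 1)" using z assms by (intro powr_mono2') auto
  then have powr_term: "\<bar>\<gamma> * ((t + x) powr \<delta> - t powr \<delta>)\<bar> \<le> \<gamma> * \<delta> * x * t powr (\<delta> - 1)"
    unfolding z(2) using assms mult_left_mono[of "z powr (\<delta> - 1)" "t powr (\<delta> - 1)" "\<gamma> * \<delta> * x"]
    by (simp add: abs_mult mult_ac)
  have "ln (mu2 \<gamma> \<delta> (t + x)) - ln (mu2 \<gamma> \<delta> t)
      = (\<delta> - 1) * (ln (t + x) - ln t) + \<gamma> * ((t + x) powr \<delta> - t powr \<delta>)"
    using ln_mu2[of \<gamma> \<delta> t] ln_mu2[of \<gamma> \<delta> "t + x"] assms by (simp add: algebra_simps)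
  moreover have "1 / t powr (1 - \<delta>) = t powr (\<delta> - 1)"
    using assms by (simp add: powr_minus_divide[symmetric])
  ultimately show ?thesis using ln_term powr_term by (simp add: algebra_simps)
qed

lemma log_lipschitz_scale_mu2:
  assumes "0 < \<gamma>" "0 < \<delta>" "\<delta> \<le> 1/2"
  shows "log_lipschitz_scale (mu2 \<gamma> \<delta>) (\<lambda>t. 1 / t powr (1 - \<delta>)) (1 + \<gamma> * \<delta>) 1"
  unfolding log_lipschitz_scale_def
proof (intro conjI allI impI ballI)
  show "(0::real) < 1" by simp
  show "mu2 \<gamma> \<delta> \<in> borel_measurable borel" unfolding mu2_def by measurable
  fix t x :: real
  assume "1 \<le> t"
  have "t powr (1 - \<delta>) \<le> t powr 1" using \<open>1 \<le> t\<close> assms by (intro powr_mono) auto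
  then show "1 / t \<le> 1 / t powr (1 - \<delta>)" using \<open>1 \<le> t\<close> by (simp add: frac_le)
  have "t powr (1/2) \<le> t powr (1 - \<delta>)" using \<open>1 \<le> t\<close> assms by (intro powr_mono) auto
  then show "1 / t powr (1 - \<delta>) \<le> 1 / sqrt t" using \<open>1 \<le> t\<close> by (simp add: frac_le powr_half_sqrt[symmetric])
  assume "x \<in> {0..t}"
  then show "0 < mu2 \<gamma> \<delta> (t + x)" using assms \<open>1 \<le> t\<close> by (simp add: mu2_def)
  show "\<bar>ln (mu2 \<gamma> \<delta> (t + x)) - ln (mu2 \<gamma> \<delta> t)\<bar> \<le> (1 + \<gamma> * \<delta>) * x * (1 / t powr (1 - \<delta>))"
    using mu2_ln_increment_le[of \<gamma> \<delta> t x] assms \<open>1 \<le> t\<close> \<open>x \<in> {0..t}\<close> by simp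
qed

lemma powr_increment_le:
  fixes s s' \<alpha> :: real
  assumes "0 < \<alpha>" "1 \<le> s" "s \<le> s'" "s' \<le> s + 1"
  shows "s' powr \<alpha> - s powr \<alpha> \<le> \<alpha> * 2 powr (max 1 \<alpha> - 1) * s powr (max 1 \<alpha> - 1) * (s' - s)"
proof -
  obtain z where z: "s \<le> z" "z \<le> s'" "s' powr \<alpha> - s powr \<alpha> = (s' - s) * (\<alpha> * z powr (\<alpha> - 1))"
    using powr_diff_mean_value[of s s' \<alpha>] assms by auto
  have "z powr (\<alpha> - 1) \<le> 2 powr (max 1 \<alpha> - 1) * s powr (max 1 \<alpha> - 1)"
  proof (cases "1 \<le> \<alpha>")
    case True
    have "z powr (\<alpha> - 1) \<le> (2 * s) powr (\<alpha> - 1)" using True z assms by (intro powr_mono2) auto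
    then show ?thesis using True assms by (simp add: powr_mult)
  next
    case False
    have "z powr (\<alpha> - 1) \<le> 1 powr (\<alpha> - 1)" using False z assms by (intro powr_mono2') auto
    then show ?thesis using False assms by simp
  qed
  then show ?thesis
    unfolding z(3) using assms by (simp add: mult_left_mono mult.commute mult.left_commute)
qed

lemma ln_mu1:
  "0 < \<alpha> \<Longrightarrow> 1 < u \<Longrightarrow>
    ln (mu1 \<alpha> \<beta> u) = ln \<alpha> - ln u + (\<alpha> - 1) * ln (ln u) + \<beta> * ln u powr \<alpha>"
  by (simp add: mu1_def ln_mult ln_div)

lemma mu1_ln_increment_le:
  assumes "0 < \<alpha>" "0 \<le> \<beta>" "exp 1 \<le> t" "0 \<le> x" "x \<le> t"
  shows "\<bar>ln (mu1 \<alpha> \<beta> (t + x)) - ln (mu1 \<alpha> \<beta> t)\<bar>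
     \<le> (1 + \<bar>\<alpha> - 1\<bar> + \<alpha> * \<beta> * 2 powr (max 1 \<alpha> - 1)) * x * (ln t powr (max 1 \<alpha> - 1) / t)"
proof -
  define a where "a = max 1 \<alpha> - 1"
  define K where "K = 1 + \<bar>\<alpha> - 1\<bar> + \<alpha> * \<beta> * 2 powr a"
  define s s' where "s = ln t" and "s' = ln (t + x)"
  have "1 < t" using assms(3) exp_gt_one[of 1] by linarith
  have "1 \<le> s" unfolding s_def using assms(3) \<open>1 < t\<close> by (simp add: ln_ge_iff)
  have "1 \<le> s powr a" using \<open>1 \<le> s\<close> by (simp add: a_def ge_one_powr_ge_zero)
  have incr: "0 \<le> s' - s" "s' - s \<le> x / t"
    using ln_add_diff_bounds[of t x] \<open>1 < t\<close> assms by (auto simp: s_def s'_def)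
  moreover have "x / t \<le> 1" using assms \<open>1 < t\<close> by simp
  ultimately have powr_incr: "0 \<le> s' powr \<alpha> - s powr \<alpha>"
      "s' powr \<alpha> - s powr \<alpha> \<le> \<alpha> * 2 powr a * s powr a * (s' - s)"
    using powr_increment_le[of \<alpha> s s'] \<open>1 \<le> s\<close> assms unfolding a_def
    by (auto intro: powr_mono2)
  have lnln_incr: "0 \<le> ln s' - ln s" "ln s' - ln s \<le> s' - s"
    using ln_add_diff_bounds[of s "s' - s"] \<open>1 \<le> s\<close> incr
    by (auto simp: divide_le_eq mult_le_cancel_left1 intro: order_trans)
  have "ln (mu1 \<alpha> \<beta> (t + x)) - ln (mu1 \<alpha> \<beta> t)
      = - (s' - s) + (\<alpha> - 1) * (ln s' - ln s) + \<beta> * (s' powr \<alpha> - s powr \<alpha>)"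
    using ln_mu1[of \<alpha> t \<beta>] ln_mu1[of \<alpha> "t + x" \<beta>] \<open>1 < t\<close> assms
    by (simp add: s_def s'_def algebra_simps)
  moreover have "\<bar>(\<alpha> - 1) * (ln s' - ln s)\<bar> \<le> \<bar>\<alpha> - 1\<bar> * (s' - s)"
    using lnln_incr by (simp add: abs_mult mult_left_mono)
  moreover have "\<bar>\<beta> * (s' powr \<alpha> - s powr \<alpha>)\<bar> \<le> \<beta> * (\<alpha> * 2 powr a * s powr a * (s' - s))"
    using powr_incr assms by (simp add: abs_mult mult_left_mono)
  ultimately have "\<bar>ln (mu1 \<alpha> \<beta> (t + x)) - ln (mu1 \<alpha> \<beta> t)\<bar>
      \<le> (s' - s) + \<bar>\<alpha> - 1\<bar> * (s' - s) + \<beta> * (\<alpha> * 2 powr a * s powr a * (s' - s))"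
    using incr by (smt (verit))
  also have "\<dots> = (1 + \<bar>\<alpha> - 1\<bar>) * (s' - s) + \<alpha> * \<beta> * 2 powr a * (s' - s) * s powr a"
    by (simp add: algebra_simps)
  also have "\<dots> \<le> (1 + \<bar>\<alpha> - 1\<bar>) * (s' - s) * s powr a + \<alpha> * \<beta> * 2 powr a * (s' - s) * s powr a"
    using incr \<open>1 \<le> s powr a\<close> mult_left_mono[of 1 "s powr a" "(1 + \<bar>\<alpha> - 1\<bar>) * (s' - s)"]
    by simp
  also have "\<dots> = K * (s' - s) * s powr a"
    by (simp add: K_def algebra_simps)
  also have "\<dots> \<le> K * (x / t) * s powr a"
    using incr \<open>1 \<le> s powr a\<close> assms by (intro mult_right_mono mult_left_mono) (auto simp: K_def)
  finally show ?thesis by (simp add: K_def a_def s_def)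
qed

lemma log_lipschitz_scale_mu1:
  assumes "0 < \<alpha>" "0 \<le> \<beta>"
  shows "\<exists>t0. log_lipschitz_scale (mu1 \<alpha> \<beta>) (\<lambda>t. ln t powr (max 1 \<alpha> - 1) / t)
                (1 + \<bar>\<alpha> - 1\<bar> + \<alpha> * \<beta> * 2 powr (max 1 \<alpha> - 1)) t0"
proof -
  define a where "a = max 1 \<alpha> - 1"
  have "((\<lambda>t. ln t powr a / sqrt t) \<longlongrightarrow> 0) at_top"
    unfolding a_def by real_asymp
  then have "eventually (\<lambda>t. ln t powr a / sqrt t < 1) at_top"
    by (rule order_tendstoD) simp
  then obtain t1 where t1: "\<And>t. t1 \<le> t \<Longrightarrow> ln t powr a / sqrt t < 1"
    by (auto simp: eventually_at_top_linorder)
  define t0 where "t0 = max (exp 1) t1"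
  have "log_lipschitz_scale (mu1 \<alpha> \<beta>) (\<lambda>t. ln t powr a / t) (1 + \<bar>\<alpha> - 1\<bar> + \<alpha> * \<beta> * 2 powr a) t0"
    unfolding log_lipschitz_scale_def
  proof (intro conjI allI impI ballI)
    show "0 < t0" by (simp add: t0_def less_max_iff_disj)
    show "mu1 \<alpha> \<beta> \<in> borel_measurable borel" unfolding mu1_def by measurable
    fix t x :: real
    assume "t0 \<le> t"
    then have "exp 1 \<le> t" "t1 \<le> t" by (auto simp: t0_def)
    then have "1 < t" using exp_gt_one[of 1] by linarith
    have "1 \<le> ln t powr a" using \<open>exp 1 \<le> t\<close> \<open>1 < t\<close> by (simp add: a_def ln_ge_iff ge_one_powr_ge_zero)
    then show "1 / t \<le> ln t powr a / t" using \<open>1 < t\<close> by (simp add: divide_right_mono)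
    have "ln t powr a / t = (ln t powr a / sqrt t) / sqrt t"
      using \<open>1 < t\<close> by (simp add: divide_divide_eq_left)
    also have "\<dots> \<le> 1 / sqrt t"
      using t1[OF \<open>t1 \<le> t\<close>] \<open>1 < t\<close> by (intro divide_right_mono) auto
    finally show "ln t powr a / t \<le> 1 / sqrt t" .
    assume "x \<in> {0..t}"
    then show "0 < mu1 \<alpha> \<beta> (t + x)" using assms \<open>1 < t\<close> by (simp add: mu1_def)
    show "\<bar>ln (mu1 \<alpha> \<beta> (t + x)) - ln (mu1 \<alpha> \<beta> t)\<bar>
        \<le> (1 + \<bar>\<alpha> - 1\<bar> + \<alpha> * \<beta> * 2 powr a) * x * (ln t powr a / t)"
      using mu1_ln_increment_le[of \<alpha> \<beta> t x] assms \<open>exp 1 \<le> t\<close> \<open>x \<in> {0..t}\<close>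
      by (simp add: a_def)
  qed
  then show ?thesis unfolding a_def by blast
qed

lemma (in prob_space) expectation_exp_neg_bounds:
  fixes X :: "'a \<Rightarrow> real"
  assumes [measurable]: "X \<in> borel_measurable M" and pos: "AE \<omega> in M. 0 < X \<omega>"
  shows "0 < expectation (\<lambda>\<omega>. exp (- X \<omega>))" "expectation (\<lambda>\<omega>. exp (- X \<omega>)) < 1"
proof -
  have lt_1: "AE \<omega> in M. exp (- X \<omega>) < 1" using pos by eventually_elim simp
  then have bound: "AE \<omega> in M. norm (exp (- X \<omega>)) \<le> norm (1::real)" by eventually_elim simp
  have int: "integrable M (\<lambda>\<omega>. exp (- X \<omega>))"
    by (rule Bochner_Integration.integrable_bound[of _ "\<lambda>_. 1::real"]) (use bound in simp_all)
  show "0 < expectation (\<lambda>\<omega>. exp (- X \<omega>))"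
    using integral_less_AE_space[of "\<lambda>_. 0" "\<lambda>\<omega>. exp (- X \<omega>)"] int by (simp add: emeasure_space_1)
  show "expectation (\<lambda>\<omega>. exp (- X \<omega>)) < 1"
    using integral_less_AE_space[OF int, of "\<lambda>_. 1"] lt_1 by (simp add: emeasure_space_1 prob_space)
qed

lemma AE_pos_if_nonneg_without_atom:
  fixes \<phi> :: "real measure"
  assumes "prob_space \<phi>" "sets \<phi> = sets borel"
    and supp: "emeasure \<phi> \<nat> = 1 \<or> emeasure \<phi> {0..} = 1" and "emeasure \<phi> {0} = 0"
  shows "AE u in \<phi>. 0 < u"
proof -
  interpret prob_space \<phi> by fact
  have "emeasure \<phi> {0..} = 1"
    using supp
  proof
    assume "emeasure \<phi> \<nat> = 1"
    moreover have "emeasure \<phi> \<nat> \<le> emeasure \<phi> {0..}"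
      using \<open>sets \<phi> = sets borel\<close> by (intro emeasure_mono) (auto elim!: Nats_cases)
    ultimately show ?thesis using emeasure_le_1[of "{0..}"] by simp
  qed
  then have "AE u in \<phi>. u \<in> {0..}"
    by (intro AE_prob_1) (simp add: emeasure_eq_measure)
  moreover have "{0} \<in> null_sets \<phi>"
    by (rule null_setsI) (simp_all add: \<open>emeasure \<phi> {0} = 0\<close> \<open>sets \<phi> = sets borel\<close>)
  then have "AE u in \<phi>. u \<notin> {0}" by (rule AE_not_in)
  ultimately show ?thesis by eventually_elim (simp add: less_le)
qed

locale iid_sequence = prob_space +
  fixes L :: "nat \<Rightarrow> 'a \<Rightarrow> real" and \<phi> :: "real measure"
  assumes indep_L: "indep_vars (\<lambda>_. borel) L {1..}"
    and distr_L: "\<And>i. 1 \<le> i \<Longrightarrow> distr M borel (L i) = \<phi>"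
begin

lemma measurable_L: "1 \<le> i \<Longrightarrow> L i \<in> borel_measurable M"
  using indep_L unfolding indep_vars_def by auto

lemma measurable_L_Suc[measurable]: "L (Suc n) \<in> borel_measurable M"
  by (simp add: measurable_L)

lemma measurable_partial_sum[measurable]: "partial_sum L n \<in> borel_measurable M"
proof -
  have "partial_sum L n = (\<lambda>\<omega>. \<Sum>i\<in>{1..n}. L i \<omega>)" by (simp add: fun_eq_iff partial_sum_def)
  then show ?thesis by (auto intro!: borel_measurable_sum measurable_L)
qed

lemma prob_space_law: "prob_space \<phi>"
  using prob_space_distr[OF measurable_L[of 1]] distr_L[of 1] by simp

lemma sets_law[simp, measurable_cong]: "sets \<phi> = sets borel"
proof -
  have "\<phi> = distr M borel (L 1)" using distr_L[of 1] by simp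
  then show ?thesis by simp
qed

lemma AE_L:
  assumes "AE u in \<phi>. P u" "1 \<le> i"
  shows "AE \<omega> in M. P (L i \<omega>)"
proof -
  have "AE u in distr M borel (L i). P u" unfolding distr_L[OF assms(2)] by (rule assms(1))
  then show ?thesis by (rule AE_distrD[OF measurable_L[OF assms(2)]])
qed

lemma expectation_L:
  fixes g :: "real \<Rightarrow> real"
  assumes "g \<in> borel_measurable borel" "1 \<le> i"
  shows "expectation (\<lambda>\<omega>. g (L i \<omega>)) = (\<integral>u. g u \<partial>\<phi>)"
  using integral_distr[OF measurable_L[OF assms(2)] assms(1)] distr_L[OF assms(2)] by simp

lemma AE_all_L_pos:
  assumes "AE u in \<phi>. 0 < u"
  shows "AE \<omega> in M. \<forall>n. 0 < L (Suc n) \<omega>"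
  using AE_L[OF assms] by (simp add: AE_all_countable)

lemma exp_neg_partial_sum:
  assumes pos: "AE u in \<phi>. 0 < u"
  shows "integrable M (\<lambda>\<omega>. exp (- partial_sum L n \<omega>))"
    and "expectation (\<lambda>\<omega>. exp (- partial_sum L n \<omega>)) = (\<integral>u. exp (- u) \<partial>\<phi>) ^ n"
proof -
  have indep: "indep_vars (\<lambda>_. borel) (\<lambda>i \<omega>. exp (- L i \<omega>)) {1..n}"
    by (rule indep_vars_compose2[OF indep_vars_subset[OF indep_L]]) auto
  have int: "integrable M (\<lambda>\<omega>. exp (- L i \<omega>))" if "i \<in> {1..n}" for i
  proof -
    from that have "1 \<le> i" by simp
    from AE_L[OF pos this] have bound: "AE \<omega> in M. norm (exp (- L i \<omega>)) \<le> norm (1::real)"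
      by eventually_elim simp
    show ?thesis
      by (rule Bochner_Integration.integrable_bound[of _ "\<lambda>_. 1::real"])
         (use bound measurable_L[OF \<open>1 \<le> i\<close>] in simp_all)
  qed
  have prod: "exp (- partial_sum L n \<omega>) = (\<Prod>i\<in>{1..n}. exp (- L i \<omega>))" for \<omega>
    by (simp add: partial_sum_def exp_sum sum_negf[symmetric])
  show "integrable M (\<lambda>\<omega>. exp (- partial_sum L n \<omega>))"
    unfolding prod using indep int by (intro indep_vars_integrable) auto
  have "expectation (\<lambda>\<omega>. exp (- partial_sum L n \<omega>)) = (\<Prod>i\<in>{1..n}. expectation (\<lambda>\<omega>. exp (- L i \<omega>)))"
    unfolding prod using indep int by (intro indep_vars_lebesgue_integral) auto
  also have "\<dots> = (\<Prod>i\<in>{1..n}. (\<integral>u. exp (- u) \<partial>\<phi>))"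
    by (intro prod.cong refl expectation_L) auto
  finally show "expectation (\<lambda>\<omega>. exp (- partial_sum L n \<omega>)) = (\<integral>u. exp (- u) \<partial>\<phi>) ^ n"
    by simp
qed

text \<open>A Chernoff bound: with q = E exp(-L) < 1 and e^\<epsilon> = (1 + q) / (2 q), the events
  T_n \<le> \<epsilon> n have probabilities at most ((1 + q) / 2)^n, so Borel-Cantelli applies.\<close>
lemma partial_sum_eventually_gt_linear:
  assumes pos: "AE u in \<phi>. 0 < u"
  shows "\<exists>\<epsilon>>0. AE \<omega> in M. eventually (\<lambda>n. \<epsilon> * real n < partial_sum L n \<omega>) sequentially"
proof -
  define q where "q = (\<integral>u. exp (- u) \<partial>\<phi>)"
  have "0 < q" "q < 1"
    using prob_space.expectation_exp_neg_bounds[OF prob_space_law, of "\<lambda>u. u"] pos by (simp_all add: q_def)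
  define \<epsilon> where "\<epsilon> = ln ((1 + q) / (2 * q))"
  define r where "r = (1 + q) / 2"
  have "0 < \<epsilon>" "0 < r" "r < 1" using \<open>0 < q\<close> \<open>q < 1\<close> by (simp_all add: \<epsilon>_def r_def)
  have "q * exp \<epsilon> = r" using \<open>0 < q\<close> \<open>q < 1\<close> by (simp add: \<epsilon>_def r_def)
  define A where "A n = {\<omega>\<in>space M. exp (- \<epsilon> * n) \<le> exp (- partial_sum L n \<omega>)}" for n
  have [measurable]: "A n \<in> events" for n unfolding A_def by measurable
  have "prob (A n) \<le> expectation (\<lambda>\<omega>. exp (- partial_sum L n \<omega>)) / exp (- \<epsilon> * n)" for n
    unfolding A_def using exp_neg_partial_sum(1)[OF pos]
    by (intro integral_Markov_inequality_measure[where A = "space M"]) auto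
  also have "\<dots> n = q ^ n * exp \<epsilon> ^ n" for n
  proof -
    have "exp (- \<epsilon> * real n) = inverse (exp \<epsilon> ^ n)"
      by (simp add: exp_minus mult.commute flip: exp_of_nat_mult)
    then show ?thesis using exp_neg_partial_sum(2)[OF pos] by (simp add: q_def divide_inverse)
  qed
  also have "\<dots> n = r ^ n" for n
    using \<open>q * exp \<epsilon> = r\<close> by (simp flip: power_mult_distrib)
  finally have "summable (\<lambda>n. prob (A n))"
    using \<open>0 < r\<close> \<open>r < 1\<close> by (intro summable_comparison_test'[OF summable_geometric[of r]]) auto
  then have "AE \<omega> in M. eventually (\<lambda>n. \<omega> \<in> space M - A n) sequentially"
    by (intro borel_cantelli_AE1) (auto simp: emeasure_eq_measure)
  then have "AE \<omega> in M. eventually (\<lambda>n. \<epsilon> * real n < partial_sum L n \<omega>) sequentially"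
    by (rule eventually_mono) (auto elim!: eventually_mono simp: A_def not_le)
  then show ?thesis using \<open>0 < \<epsilon>\<close> by blast
qed

lemma eventually_L_le_two_ln:
  assumes mgf: "(\<integral>\<^sup>+ u. ennreal (exp u) \<partial>\<phi>) < \<infinity>"
  shows "AE \<omega> in M. eventually (\<lambda>n. L (Suc n) \<omega> \<le> 2 * ln (real (Suc n))) sequentially"
proof -
  define Z where "Z = (\<integral>u. exp u \<partial>\<phi>)"
  have "integrable \<phi> exp"
    by (rule integrableI_nonneg) (use mgf in auto)
  then have int: "integrable M (\<lambda>\<omega>. exp (L (Suc n) \<omega>))" for n
    using distr_L[of "Suc n"] integrable_distr_eq[OF measurable_L_Suc, of exp n] by simp
  define A where "A n = {\<omega>\<in>space M. real (Suc n) ^ 2 \<le> exp (L (Suc n) \<omega>)}" for n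
  have [measurable]: "A n \<in> events" for n unfolding A_def by measurable
  have prob_A: "prob (A n) \<le> Z * inverse (real (Suc n) ^ 2)" for n
    using integral_Markov_inequality_measure[OF int[of n], where A = "space M" and c = "real (Suc n) ^ 2"]
      expectation_L[of exp "Suc n"]
    by (simp add: A_def Z_def divide_inverse)
  have "summable (\<lambda>n. Z * inverse (real (Suc n) ^ 2))"
    using summable_Suc_iff[of "\<lambda>n. inverse (real n ^ 2)"] inverse_power_summable[of 2]
    by (intro summable_mult) simp
  then have "summable (\<lambda>n. prob (A n))"
    by (rule summable_comparison_test') (use prob_A in auto)
  then have ev: "AE \<omega> in M. eventually (\<lambda>n. \<omega> \<in> space M - A n) sequentially"
    by (intro borel_cantelli_AE1) (auto simp: emeasure_eq_measure)
  have not_A: "L (Suc n) \<omega> \<le> 2 * ln (real (Suc n))" if "\<omega> \<in> space M - A n" for \<omega> n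
  proof -
    have "exp (L (Suc n) \<omega>) < real (Suc n) ^ 2" using that by (auto simp: A_def)
    then have "L (Suc n) \<omega> < ln (real (Suc n) ^ 2)" by (metis exp_less_cancel_iff exp_ln of_nat_0_less_iff zero_less_Suc zero_less_power)
    then show ?thesis by (simp add: ln_realpow)
  qed
  show ?thesis
    by (rule eventually_mono[OF ev]) (erule eventually_mono, erule not_A)
qed

lemma eventually_step_small:
  assumes pos: "AE u in \<phi>. 0 < u" and mgf: "(\<integral>\<^sup>+ u. ennreal (exp u) \<partial>\<phi>) < \<infinity>"
    and \<rho>: "\<And>t. t0 \<le> t \<Longrightarrow> \<rho> t \<le> 1 / sqrt t"
  shows "AE \<omega> in M. eventually (\<lambda>n. t0 \<le> partial_sum L n \<omega> \<and> 0 < L (Suc n) \<omega> \<and>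
           L (Suc n) \<omega> * \<rho> (partial_sum L n \<omega>) \<le> 1) sequentially"
proof -
  obtain \<epsilon> where "0 < \<epsilon>" and linear: "AE \<omega> in M. eventually (\<lambda>n. \<epsilon> * real n < partial_sum L n \<omega>) sequentially"
    using partial_sum_eventually_gt_linear[OF pos] by blast
  have "filterlim (\<lambda>n. \<epsilon> * real n) at_top sequentially"
    using \<open>0 < \<epsilon>\<close> by real_asymp
  then have e1: "eventually (\<lambda>n. t0 \<le> \<epsilon> * real n) sequentially"
    by (simp add: filterlim_at_top)
  have "(\<lambda>n. 2 * ln (real (Suc n)) / sqrt (\<epsilon> * real n)) \<longlonglongrightarrow> 0"
    using \<open>0 < \<epsilon>\<close> by real_asymp
  then have e2: "eventually (\<lambda>n. 2 * ln (real (Suc n)) / sqrt (\<epsilon> * real n) < 1) sequentially"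
    by (rule order_tendstoD) simp
  show ?thesis
    using linear eventually_L_le_two_ln[OF mgf] AE_all_L_pos[OF pos]
  proof eventually_elim
    case (elim \<omega>)
    show ?case
      using elim(1,2) e1 e2 eventually_gt_at_top[of 0]
    proof eventually_elim
      case (elim n)
      define t l where "t = partial_sum L n \<omega>" and "l = L (Suc n) \<omega>"
      have "0 < l" "0 < \<epsilon> * real n" "\<epsilon> * real n < t" "t0 \<le> t"
        using elim \<open>0 < \<epsilon>\<close> \<open>\<forall>n. 0 < L (Suc n) \<omega>\<close> by (auto simp: t_def l_def)
      have "l * \<rho> t \<le> l / sqrt t"
        using \<rho>[OF \<open>t0 \<le> t\<close>] \<open>0 < l\<close> mult_left_mono[of "\<rho> t" "1 / sqrt t" l] by simp
      also have "\<dots> \<le> l / sqrt (\<epsilon> * real n)"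
        using \<open>0 < l\<close> \<open>0 < \<epsilon> * real n\<close> \<open>\<epsilon> * real n < t\<close> by (intro divide_left_mono) auto
      also have "\<dots> \<le> 2 * ln (real (Suc n)) / sqrt (\<epsilon> * real n)"
        using elim \<open>0 < \<epsilon> * real n\<close> by (intro divide_right_mono) (auto simp: l_def)
      finally show ?case
        using elim \<open>t0 \<le> t\<close> \<open>0 < l\<close> by (simp add: t_def l_def)
    qed
  qed
qed

end

lemma log_lipschitz_scale_intensity:
  assumes "(\<alpha> > 0 \<and> \<beta> \<ge> 0 \<and> \<mu> = mu1 \<alpha> \<beta> \<and> \<rho> = (\<lambda>t. (ln t) powr (max 1 \<alpha> - 1) / t))
       \<or> (\<gamma> > 0 \<and> 0 < \<delta> \<and> \<delta> \<le> 1/2 \<and> \<mu> = mu2 \<gamma> \<delta> \<and> \<rho> = (\<lambda>t. 1 / t powr (1 - \<delta>)))"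
  shows "\<exists>C>0. \<exists>t0. log_lipschitz_scale \<mu> \<rho> C t0"
  using assms
proof (elim disjE conjE)
  assume "0 < \<alpha>" "0 \<le> \<beta>" "\<mu> = mu1 \<alpha> \<beta>" "\<rho> = (\<lambda>t. (ln t) powr (max 1 \<alpha> - 1) / t)"
  moreover have "0 < 1 + \<bar>\<alpha> - 1\<bar> + \<alpha> * \<beta> * 2 powr (max 1 \<alpha> - 1)"
    using \<open>0 < \<alpha>\<close> \<open>0 \<le> \<beta>\<close> by (intro add_pos_nonneg) auto
  ultimately show ?thesis using log_lipschitz_scale_mu1 by blast
next
  assume "0 < \<gamma>" "0 < \<delta>" "\<delta> \<le> 1/2" "\<mu> = mu2 \<gamma> \<delta>" "\<rho> = (\<lambda>t. 1 / t powr (1 - \<delta>))"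
  moreover have "0 < 1 + \<gamma> * \<delta>" using \<open>0 < \<gamma>\<close> \<open>0 < \<delta>\<close> by (simp add: add_pos_pos)
  ultimately show ?thesis using log_lipschitz_scale_mu2 by blast
qed

lemma log_lipschitz_scale_eventually_Rterm_error:
  fixes T l :: "nat \<Rightarrow> real"
  assumes scale: "log_lipschitz_scale \<mu> \<rho> C t0" and "0 \<le> C"
    and small: "eventually (\<lambda>n. t0 \<le> T n \<and> 0 < l (Suc n) \<and> l (Suc n) * \<rho> (T n) \<le> 1) sequentially"
  shows "\<exists>I0. \<forall>f. (\<forall>x. f differentiable (at x)) \<and> mono_on {0..} f \<longrightarrow> (\<forall>i\<ge>I0.
           \<bar>Rterm \<mu> f (T (i - 1)) (l i) - (f (l i) - f 0)\<bar>
             \<le> C * exp C * (f (l i) - f 0) * l i * \<rho> (T (i - 1)))"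
proof -
  obtain N where N: "\<And>n. N \<le> n \<Longrightarrow> t0 \<le> T n \<and> 0 < l (Suc n) \<and> l (Suc n) * \<rho> (T n) \<le> 1"
    using small by (auto simp: eventually_sequentially)
  show ?thesis
  proof (intro exI[of _ "Suc N"] allI impI)
    fix f :: "real \<Rightarrow> real" and i :: nat
    assume f: "(\<forall>x. f differentiable (at x)) \<and> mono_on {0..} f" and "Suc N \<le> i"
    then obtain n where "i = Suc n" "N \<le> n" by (cases i) auto
    then show "\<bar>Rterm \<mu> f (T (i - 1)) (l i) - (f (l i) - f 0)\<bar>
        \<le> C * exp C * (f (l i) - f 0) * l i * \<rho> (T (i - 1))"
      using log_lipschitz_scale_Rterm_error[OF scale \<open>0 \<le> C\<close>, of "T n" "l (Suc n)" f] N[of n] f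
      by simp
  qed
qed

theorem lemma4p1:
  fixes M :: "'a measure" and L :: "nat \<Rightarrow> 'a \<Rightarrow> real" and \<phi> :: "real measure"
    and \<mu> \<rho> :: "real \<Rightarrow> real" and \<alpha> \<beta> \<gamma> \<delta> :: real
  assumes "prob_space M"
    and "prob_space \<phi>" and "sets \<phi> = sets borel"
    and "emeasure \<phi> \<nat> = 1 \<or> emeasure \<phi> {0..} = 1"
    and "emeasure \<phi> {0} = 0"
    and "\<forall>\<xi>::real. (\<integral>\<^sup>+ u. ennreal (exp (\<xi> * u)) \<partial>\<phi>) < \<infinity>"
    and "prob_space.indep_vars M (\<lambda>_. borel) L {1..}"
    and "\<forall>i\<ge>1. distr M borel (L i) = \<phi>"
    and "(\<alpha> > 0 \<and> \<beta> \<ge> 0 \<and> \<mu> = mu1 \<alpha> \<beta> \<and>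
            \<rho> = (\<lambda>t. (ln t) powr (max 1 \<alpha> - 1) / t))
       \<or> (\<gamma> > 0 \<and> 0 < \<delta> \<and> \<delta> \<le> 1/2 \<and> \<mu> = mu2 \<gamma> \<delta> \<and>
            \<rho> = (\<lambda>t. 1 / t powr (1 - \<delta>)))"
  shows "\<exists>c>0. AE \<omega> in M. \<exists>I0::nat. \<forall>f::real \<Rightarrow> real.
           (\<forall>x. f differentiable (at x)) \<and> mono_on {0..} f \<longrightarrow>
           (\<forall>i\<ge>I0.
              \<bar>Rterm \<mu> f (partial_sum L (i - 1) \<omega>) (L i \<omega>) - (f (L i \<omega>) - f 0)\<bar>
                \<le> c * (f (L i \<omega>) - f 0) * L i \<omega> * \<rho> (partial_sum L (i - 1) \<omega>))"
proof -
  interpret iid_sequence M L \<phi>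
    using assms(1,7,8) by (simp add: iid_sequence_def iid_sequence_axioms_def)
  obtain C t0 where "0 < C" and scale: "log_lipschitz_scale \<mu> \<rho> C t0"
    using log_lipschitz_scale_intensity[OF assms(9)] by blast
  have "AE \<omega> in M. eventually (\<lambda>n. t0 \<le> partial_sum L n \<omega> \<and> 0 < L (Suc n) \<omega> \<and>
           L (Suc n) \<omega> * \<rho> (partial_sum L n \<omega>) \<le> 1) sequentially"
    using scale assms(6)[rule_format, of 1]
    by (intro eventually_step_small AE_pos_if_nonneg_without_atom assms(2-5))
       (auto simp: log_lipschitz_scale_def)
  then have "AE \<omega> in M. \<exists>I0::nat. \<forall>f::real \<Rightarrow> real.
           (\<forall>x. f differentiable (at x)) \<and> mono_on {0..} f \<longrightarrow>
           (\<forall>i\<ge>I0.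
              \<bar>Rterm \<mu> f (partial_sum L (i - 1) \<omega>) (L i \<omega>) - (f (L i \<omega>) - f 0)\<bar>
                \<le> C * exp C * (f (L i \<omega>) - f 0) * L i \<omega> * \<rho> (partial_sum L (i - 1) \<omega>))"
    by (rule eventually_mono)
       (rule log_lipschitz_scale_eventually_Rterm_error[OF scale less_imp_le[OF \<open>0 < C\<close>]])
  then show ?thesis
    using \<open>0 < C\<close> by (intro exI[of _ "C * exp C"]) auto
qed

end
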